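(* $\mathfrak{L}(\mathrm{rtDVA}(1))\subsetneq\bigcup_{k}\mathfrak{L}(\mathrm{rtD}k\mathrm{CA})$.
   Context: $\mathfrak{L}(A)$ denotes the class of languages recognized by machines of type $A$. A real-time deterministic vector automaton of dimension $k$ ($\mathrm{rtDVA}(k)$) is a 6-tuple $(Q,\Sigma,\delta,q_0,Q_a,v)$ with finite state set $Q$, initial state $q_0$, accept states $Q_a$, initial row vector $v\in\mathbb{Q}^k$ (freely chosen), and $\delta:Q\times(\Sigma\cup\{\cent,\$\})\times\{=,\neq\}\to Q\times S$, $S$ the set of $k\times k$ rational matrices. The input $w$ is read as $\cent w\$$ left to right, one symbol per step; in state $q$ reading $\sigma$, with $\omega$ equal to "$=$" iff the first vector entry equals $1$, if $\delta(q,\sigma,\omega)=(q',M)$ the machine goes to $q'$ and multiplies its row vector on the right by $M$. Acceptance: after processing $\$$, the state is in $Q_a$ and the first vector entry equals $1$. A real-time deterministic $k$-counter automaton (rtD$k$CA) is a 5-tuple $(Q,\Sigma,\delta,q_0,Q_a)$ with $k$ integer counters initially $0$, reading $\cent w\$$ one symbol per step; $\delta(q,\sigma,\theta)=(q',c)$ with $\theta\in\{0,\pm\}^k$ the zero/nonzero status of each counter and $c\in\{-1,0,1\}^k$ the counter increments; acceptance iff in an accept state after scanning $\$$. The union ranges over all $k\ge 1$. *)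

theory Defs
  imports Complex_Main
begin

text \<open>Alphabets are finite nonempty sets of natural numbers (any finite alphabet
  is isomorphic to one of these), so language classes can range over all alphabets.\<close>

datatype 'a tsym = Cent | Dollar | Sym 'a

definition tape_syms :: "'a set \<Rightarrow> 'a tsym set" where
  "tape_syms \<Sigma> = {Cent, Dollar} \<union> Sym ` \<Sigma>"

definition tape :: "'a list \<Rightarrow> 'a tsym list" where
  "tape w = Cent # map Sym w @ [Dollar]"

text \<open>Row vectors of dimension k are functions nat => rat (entries with index < k
  matter); k x k matrices are functions nat => nat => rat. Row vector times matrix:\<close>

definition vecmat :: "nat \<Rightarrow> (nat \<Rightarrow> rat) \<Rightarrow> (nat \<Rightarrow> nat \<Rightarrow> rat) \<Rightarrow> (nat \<Rightarrow> rat)" where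
  "vecmat k v M = (\<lambda>j. \<Sum>i<k. v i * M i j)"

type_synonym dva_trans = "nat \<Rightarrow> nat tsym \<Rightarrow> bool \<Rightarrow> nat \<times> (nat \<Rightarrow> nat \<Rightarrow> rat)"

text \<open>The boolean argument of the transition function is \<open>True\<close> iff the first vector entry equals 1
  (i.e. omega is "=").\<close>

definition dva_step :: "nat \<Rightarrow> dva_trans \<Rightarrow> nat \<times> (nat \<Rightarrow> rat) \<Rightarrow> nat tsym \<Rightarrow> nat \<times> (nat \<Rightarrow> rat)" where
  "dva_step k \<delta> c \<sigma> = (let (q, v) = c; (q', M) = \<delta> q \<sigma> (v 0 = 1) in (q', vecmat k v M))"

definition dva_run :: "nat \<Rightarrow> dva_trans \<Rightarrow> nat \<Rightarrow> (nat \<Rightarrow> rat) \<Rightarrow> nat list \<Rightarrow> nat \<times> (nat \<Rightarrow> rat)" where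
  "dva_run k \<delta> q0 v w = foldl (dva_step k \<delta>) (q0, v) (tape w)"

definition dva_accepts :: "nat \<Rightarrow> dva_trans \<Rightarrow> nat \<Rightarrow> nat set \<Rightarrow> (nat \<Rightarrow> rat) \<Rightarrow> nat list \<Rightarrow> bool" where
  "dva_accepts k \<delta> q0 Qa v w = (let (q, u) = dva_run k \<delta> q0 v w in q \<in> Qa \<and> u 0 = 1)"

definition is_rtDVA :: "nat \<Rightarrow> nat set \<Rightarrow> nat set \<Rightarrow> dva_trans \<Rightarrow> nat \<Rightarrow> nat set \<Rightarrow> bool" where
  "is_rtDVA k \<Sigma> Q \<delta> q0 Qa \<longleftrightarrow> finite Q \<and> q0 \<in> Q \<and> Qa \<subseteq> Q \<and>
     (\<forall>q\<in>Q. \<forall>\<sigma>\<in>tape_syms \<Sigma>. \<forall>\<omega>. fst (\<delta> q \<sigma> \<omega>) \<in> Q)"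

definition L_rtDVA :: "nat \<Rightarrow> (nat set \<times> nat list set) set" where
  "L_rtDVA k = {(\<Sigma>, L). finite \<Sigma> \<and> \<Sigma> \<noteq> {} \<and>
     (\<exists>Q \<delta> q0 Qa v. is_rtDVA k \<Sigma> Q \<delta> q0 Qa \<and>
        L = {w \<in> lists \<Sigma>. dva_accepts k \<delta> q0 Qa v w})}"

text \<open>The status argument is the list (length k) recording for each counter whether it is zero;
  the result gives the new state and the increments (in {-1,0,1}) of counters 0..k-1.\<close>

type_synonym ca_trans = "nat \<Rightarrow> nat tsym \<Rightarrow> bool list \<Rightarrow> nat \<times> (nat \<Rightarrow> int)"

definition ca_step :: "nat \<Rightarrow> ca_trans \<Rightarrow> nat \<times> (nat \<Rightarrow> int) \<Rightarrow> nat tsym \<Rightarrow> nat \<times> (nat \<Rightarrow> int)" where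
  "ca_step k \<delta> c \<sigma> = (let (q, cnt) = c; (q', d) = \<delta> q \<sigma> (map (\<lambda>i. cnt i = 0) [0..<k])
     in (q', \<lambda>i. if i < k then cnt i + d i else cnt i))"

definition ca_accepts :: "nat \<Rightarrow> ca_trans \<Rightarrow> nat \<Rightarrow> nat set \<Rightarrow> nat list \<Rightarrow> bool" where
  "ca_accepts k \<delta> q0 Qa w = (fst (foldl (ca_step k \<delta>) (q0, \<lambda>_. 0) (tape w)) \<in> Qa)"

definition is_rtDCA :: "nat \<Rightarrow> nat set \<Rightarrow> nat set \<Rightarrow> ca_trans \<Rightarrow> nat \<Rightarrow> nat set \<Rightarrow> bool" where
  "is_rtDCA k \<Sigma> Q \<delta> q0 Qa \<longleftrightarrow> finite Q \<and> q0 \<in> Q \<and> Qa \<subseteq> Q \<and>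
     (\<forall>q\<in>Q. \<forall>\<sigma>\<in>tape_syms \<Sigma>. \<forall>\<theta>. length \<theta> = k \<longrightarrow>
        fst (\<delta> q \<sigma> \<theta>) \<in> Q \<and> (\<forall>i<k. snd (\<delta> q \<sigma> \<theta>) i \<in> {-1, 0, 1}))"

definition L_rtDCA :: "nat \<Rightarrow> (nat set \<times> nat list set) set" where
  "L_rtDCA k = {(\<Sigma>, L). finite \<Sigma> \<and> \<Sigma> \<noteq> {} \<and>
     (\<exists>Q \<delta> q0 Qa. is_rtDCA k \<Sigma> Q \<delta> q0 Qa \<and>
        L = {w \<in> lists \<Sigma>. ca_accepts k \<delta> q0 Qa w})}"

end

theory Submission
  imports Defs "HOL-Computational_Algebra.Primes" "HOL-Library.Countable"
begin

text \<open>A one-dimensional rtDVA multiplies a single rational by factors from a finite set, so by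
  unique factorisation its value is described by its sign and its p-adic valuations for the
  finitely many primes p occurring in the initial value or in a factor. Each valuation moves by a
  bounded amount per step; storing it as K times a counter plus a bounded remainder in the finite
  control lets a real-time counter automaton follow it and still detect when the value equals 1.

  Conversely, \<open>{0\<^sup>n 1\<^sup>m 2\<^sup>k | k = m \<or> k = m + n}\<close> is recognised with two counters but
  not by an rtDVA(1). After reading \<open>0\<^sup>n 1\<^sup>m\<close>, let t \<le> m be the first number of 2s after which
  the value is 1 or the end marker would be accepted. Before t the value is never 1, so the
  run on 2s depends only on the state; hence the configuration, which determines both n and m,
  is determined by the state, t and which of the two events happened. For n, m \<le> N = 2|Q| there
  are fewer such triples than pairs (n, m).\<close>

definition rat_valuation :: "int \<Rightarrow> rat \<Rightarrow> int" where
  "rat_valuation p x =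
     (case quotient_of x of (a, b) \<Rightarrow> int (multiplicity p a) - int (multiplicity p b))"

lemma rat_valuation_of_int_divide:
  assumes "prime p" "a \<noteq> 0" "b \<noteq> 0"
  shows "rat_valuation p (of_int a / of_int b) = int (multiplicity p a) - int (multiplicity p b)"
proof -
  obtain a' b' where q: "quotient_of (of_int a / of_int b) = (a', b')"
    by (cases "quotient_of (of_int a / of_int b)") auto
  have "b' > 0" using q quotient_of_denom_pos by blast
  have "of_int a / of_int b = (of_int a' / of_int b' :: rat)"
    using q quotient_of_div by blast
  hence cross: "a * b' = a' * b"
    using \<open>b' > 0\<close> assms(3) by (simp add: field_simps flip: of_int_mult)
  hence "a' \<noteq> 0" using assms(2,3) \<open>b' > 0\<close> by auto
  have "multiplicity p a + multiplicity p b' = multiplicity p a' + multiplicity p b"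
    using arg_cong[OF cross, of "multiplicity p"] assms \<open>a' \<noteq> 0\<close> \<open>b' > 0\<close>
    by (simp add: prime_elem_multiplicity_mult_distrib[OF prime_imp_prime_elem])
  thus ?thesis using q by (simp add: rat_valuation_def)
qed

lemma rat_valuation_one [simp]: "rat_valuation p 1 = 0"
  by (simp add: rat_valuation_def)

lemma rat_valuation_mult:
  assumes "prime p" "x \<noteq> 0" "y \<noteq> 0"
  shows "rat_valuation p (x * y) = rat_valuation p x + rat_valuation p y"
proof -
  obtain a b c d where qx: "quotient_of x = (a, b)" and qy: "quotient_of y = (c, d)"
    by (meson surj_pair)
  have "b > 0" "d > 0" using qx qy quotient_of_denom_pos by blast+
  have x: "x = of_int a / of_int b" and y: "y = of_int c / of_int d"
    using qx qy quotient_of_div by blast+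
  hence "a \<noteq> 0" "c \<noteq> 0" using assms by auto
  have "rat_valuation p (x * y) = rat_valuation p (of_int (a * c) / of_int (b * d))"
    using x y by simp
  also have "\<dots> = int (multiplicity p (a * c)) - int (multiplicity p (b * d))"
    using \<open>a \<noteq> 0\<close> \<open>c \<noteq> 0\<close> \<open>b > 0\<close> \<open>d > 0\<close> by (intro rat_valuation_of_int_divide assms(1)) simp_all
  also have "\<dots> = rat_valuation p x + rat_valuation p y"
    using \<open>a \<noteq> 0\<close> \<open>c \<noteq> 0\<close> \<open>b > 0\<close> \<open>d > 0\<close> x y assms(1)
    by (simp add: rat_valuation_of_int_divide
                  prime_elem_multiplicity_mult_distrib[OF prime_imp_prime_elem])
  finally show ?thesis .
qed

lemma finite_rat_valuation_support: "finite {p. prime p \<and> rat_valuation p x \<noteq> 0}"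
proof -
  obtain a b where q: "quotient_of x = (a, b)" by (cases "quotient_of x") auto
  have "{p. prime p \<and> rat_valuation p x \<noteq> 0} \<subseteq> prime_factors a \<union> prime_factors b"
    using q by (auto simp: rat_valuation_def prime_factors_multiplicity)
  thus ?thesis by (rule finite_subset) simp
qed

lemma rat_eq_1_iff_valuations:
  "x = 1 \<longleftrightarrow> x > 0 \<and> (\<forall>p. prime p \<longrightarrow> rat_valuation p x = 0)"
proof (intro iffI conjI; clarsimp?)
  assume pos: "x > 0" and val: "\<forall>p. prime p \<longrightarrow> rat_valuation p x = 0"
  obtain a b where q: "quotient_of x = (a, b)" by (cases "quotient_of x") auto
  have "b > 0" using q quotient_of_denom_pos by blast
  have x: "x = of_int a / of_int b" using q quotient_of_div by blast
  hence "a > 0" using pos \<open>b > 0\<close> by (simp add: zero_less_divide_iff)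
  have "normalize a = normalize b"
    using \<open>a > 0\<close> \<open>b > 0\<close> val q by (intro multiplicity_eq_imp_eq) (auto simp: rat_valuation_def)
  hence "a = b" using \<open>a > 0\<close> \<open>b > 0\<close> by simp
  thus "x = 1" using x \<open>b > 0\<close> by simp
qed

text \<open>An integer y is kept as \<open>y = r + K * c\<close> with the remainder r in the finite control and c
  in a counter that moves by at most 1 per step. Keeping r of the same sign as c makes
  \<open>y + d = 0\<close> decidable from r, d and the zero test of c, and lets r reveal the sign of c,
  which the zero test alone does not.\<close>

definition window_step :: "int \<Rightarrow> bool \<Rightarrow> int \<Rightarrow> int \<Rightarrow> int \<times> int" where
  "window_step K counter_zero r d = (let t = r + d in
     if counter_zero then (if t > K then (t - K, 1) else if t < -K then (t + K, -1) else (t, 0))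
     else if r > 0 then (if t > K then (t - K, 1) else if t \<le> 0 then (t + K, -1) else (t, 0))
     else (if t < -K then (t + K, -1) else if t \<ge> 0 then (t - K, 1) else (t, 0)))"

definition window_inv :: "int \<Rightarrow> int \<Rightarrow> int \<Rightarrow> int \<Rightarrow> bool" where
  "window_inv K y r c \<longleftrightarrow> y = r + K * c \<and> \<bar>r\<bar> \<le> K \<and> (c > 0 \<longrightarrow> r > 0) \<and> (c < 0 \<longrightarrow> r < 0)"

lemma window_step_bounded:
  assumes "\<bar>r\<bar> \<le> K" "\<bar>d\<bar> \<le> K"
  shows "\<bar>fst (window_step K z r d)\<bar> \<le> K" "snd (window_step K z r d) \<in> {-1, 0, 1}"
  using assms unfolding window_step_def Let_def by auto

lemma window_inv_sign:
  assumes "window_inv K y r c"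
  shows "c > 0 \<Longrightarrow> y > K" "c < 0 \<Longrightarrow> y < -K"
proof -
  have "\<bar>r\<bar> \<le> K" using assms by (simp add: window_inv_def)
  hence "c > 0 \<Longrightarrow> K * c \<ge> K" "c < 0 \<Longrightarrow> K * c \<le> -K"
    using mult_left_mono[of 1 c K] mult_left_mono[of c "-1" K] by auto
  thus "c > 0 \<Longrightarrow> y > K" "c < 0 \<Longrightarrow> y < -K"
    using assms unfolding window_inv_def by auto
qed

lemma window_inv_add_eq_0_iff:
  assumes "window_inv K y r c" "\<bar>d\<bar> \<le> K"
  shows "y + d = 0 \<longleftrightarrow> c = 0 \<and> r + d = 0"
  using window_inv_sign[OF assms(1)] assms
  by (cases c "0::int" rule: linorder_cases) (auto simp: window_inv_def)

lemma window_inv_step: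
  assumes "window_inv K y r c" "\<bar>d\<bar> \<le> K"
  shows "window_inv K (y + d)
           (fst (window_step K (c = 0) r d)) (c + snd (window_step K (c = 0) r d))"
  using window_inv_sign[OF assms(1)] assms
  by (cases c "0::int" rule: linorder_cases)
     (auto simp: window_inv_def window_step_def Let_def ring_distribs)

definition dva1_factor :: "dva_trans \<Rightarrow> nat \<Rightarrow> nat tsym \<Rightarrow> bool \<Rightarrow> rat" where
  "dva1_factor \<delta> q \<sigma> \<omega> = snd (\<delta> q \<sigma> \<omega>) 0 0"

definition dva1_step :: "dva_trans \<Rightarrow> nat \<times> rat \<Rightarrow> nat tsym \<Rightarrow> nat \<times> rat" where
  "dva1_step \<delta> c \<sigma> =
     (fst (\<delta> (fst c) \<sigma> (snd c = 1)), snd c * dva1_factor \<delta> (fst c) \<sigma> (snd c = 1))"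

lemma foldl_dva_step_1:
  "(fst (foldl (dva_step 1 \<delta>) c xs), snd (foldl (dva_step 1 \<delta>) c xs) 0) =
     foldl (dva1_step \<delta>) (fst c, snd c 0) xs"
proof (induction xs arbitrary: c)
  case (Cons \<sigma> xs)
  have "(fst (dva_step 1 \<delta> c \<sigma>), snd (dva_step 1 \<delta> c \<sigma>) 0) = dva1_step \<delta> (fst c, snd c 0) \<sigma>"
    by (cases c; cases "\<delta> (fst c) \<sigma> (snd c 0 = 1)")
       (simp add: dva_step_def dva1_step_def dva1_factor_def vecmat_def)
  with Cons.IH[of "dva_step 1 \<delta> c \<sigma>"] show ?case by simp
qed simp

lemma dva_accepts_1_iff:
  "dva_accepts 1 \<delta> q0 Qa v w \<longleftrightarrow>
     fst (foldl (dva1_step \<delta>) (q0, v 0) (tape w)) \<in> Qa \<and>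
     snd (foldl (dva1_step \<delta>) (q0, v 0) (tape w)) = 1"
  using foldl_dva_step_1[of \<delta> "(q0, v)" "tape w"]
  by (cases "dva_run 1 \<delta> q0 v w") (auto simp: dva_accepts_def dva_run_def dest: sym)

lemma set_tape_subset: "w \<in> lists \<Sigma> \<Longrightarrow> set (tape w) \<subseteq> tape_syms \<Sigma>"
  by (auto simp: tape_def tape_syms_def)

lemma dva1_run_state_closed:
  assumes "is_rtDVA k \<Sigma> Q \<delta> q0 Qa" "fst c \<in> Q" "set xs \<subseteq> tape_syms \<Sigma>"
  shows "fst (foldl (dva1_step \<delta>) c xs) \<in> Q"
  using assms(2,3)
proof (induction xs arbitrary: c)
  case (Cons \<sigma> xs)
  have "fst (dva1_step \<delta> c \<sigma>) \<in> Q"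
    using assms(1) Cons.prems by (simp add: is_rtDVA_def dva1_step_def)
  with Cons show ?case by simp
qed simp

locale dva1_simulation =
  fixes \<Sigma> Q :: "nat set" and \<delta> :: dva_trans and q0 :: nat and Qa :: "nat set" and x0 :: rat
  assumes finite_alphabet: "finite \<Sigma>" and is_dva: "is_rtDVA 1 \<Sigma> Q \<delta> q0 Qa"
begin

definition factors :: "rat set" where
  "factors = (\<lambda>(q, \<sigma>, \<omega>). dva1_factor \<delta> q \<sigma> \<omega>) ` (Q \<times> tape_syms \<Sigma> \<times> UNIV)"

definition relevant_primes :: "int set" where
  "relevant_primes = {p. prime p \<and> (\<exists>s \<in> insert x0 factors. rat_valuation p s \<noteq> 0)}"

definition ps :: "int list" where
  "ps = sorted_list_of_set relevant_primes"

definition n :: nat where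
  "n = length ps"

definition K :: int where
  "K = (\<Sum>p\<in>relevant_primes. \<Sum>s\<in>insert x0 factors. \<bar>rat_valuation p s\<bar>)"

definition registers :: "int list set" where
  "registers = {rs. length rs = n \<and> set rs \<subseteq> {-K..K}}"

text \<open>A state of the counter automaton encodes the state of the vector automaton, the sign of its
  value, the window remainders of the relevant valuations and whether the value is 1. Counter i
  holds the window counter of the valuation at \<open>ps ! i\<close>; the automaton is given \<open>Suc n\<close>
  counters, the last one unused, because counter automata need at least one counter.\<close>

definition counter_states :: "nat set" where
  "counter_states = to_nat ` (Q \<times> {-1, 0, 1 :: rat} \<times> registers \<times> (UNIV :: bool set))"

definition counter_accepting :: "nat set" where
  "counter_accepting = to_nat ` (Qa \<times> {-1, 0, 1 :: rat} \<times> registers \<times> {True})"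

definition counter_trans :: ca_trans where
  "counter_trans code \<sigma> \<theta> = (case from_nat code :: nat \<times> rat \<times> int list \<times> bool of (q, z, rs, f) \<Rightarrow>
     let s = dva1_factor \<delta> q \<sigma> f;
         ws = map (\<lambda>i. window_step K (\<theta> ! i) (rs ! i) (rat_valuation (ps ! i) s)) [0..<n]
     in (to_nat (fst (\<delta> q \<sigma> f), z * sgn s, map fst ws,
                 z * sgn s = 1 \<and> (\<forall>i<n. \<theta> ! i \<and> rs ! i + rat_valuation (ps ! i) s = 0)),
         \<lambda>i. if i < n then snd (ws ! i) else 0))"

definition counter_init :: nat where
  "counter_init = to_nat (q0, sgn x0, map (\<lambda>p. rat_valuation p x0) ps, x0 = 1)"

definition simulates :: "nat \<times> (nat \<Rightarrow> int) \<Rightarrow> nat \<times> rat \<Rightarrow> bool" where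
  "simulates c d \<longleftrightarrow> (case (c, d) of ((code, cnt), (q, x)) \<Rightarrow>
     \<exists>rs. code = to_nat (q, sgn x, rs, x = 1) \<and> q \<in> Q \<and> rs \<in> registers \<and>
       (x \<noteq> 0 \<longrightarrow> (\<forall>i<n. window_inv K (rat_valuation (ps ! i) x) (rs ! i) (cnt i)) \<and>
                   (\<forall>p. prime p \<and> p \<notin> relevant_primes \<longrightarrow> rat_valuation p x = 0)))"

lemma finite_factors: "finite factors"
  using finite_alphabet is_dva unfolding factors_def is_rtDVA_def tape_syms_def by auto

lemma finite_relevant_primes: "finite relevant_primes"
proof -
  have "relevant_primes \<subseteq> (\<Union>s \<in> insert x0 factors. {p. prime p \<and> rat_valuation p s \<noteq> 0})"
    unfolding relevant_primes_def by auto
  thus ?thesis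
    using finite_factors finite_rat_valuation_support by (auto intro: finite_subset)
qed

lemma set_ps: "set ps = relevant_primes"
  using finite_relevant_primes by (simp add: ps_def)

lemma nth_ps_relevant: "i < n \<Longrightarrow> ps ! i \<in> relevant_primes"
  unfolding n_def using set_ps nth_mem by blast

lemma factor_in_factors: "q \<in> Q \<Longrightarrow> \<sigma> \<in> tape_syms \<Sigma> \<Longrightarrow> dva1_factor \<delta> q \<sigma> \<omega> \<in> factors"
  unfolding factors_def by (rule image_eqI[of _ _ "(q, \<sigma>, \<omega>)"]) auto

lemma rat_valuation_le_K:
  assumes "p \<in> relevant_primes" "s \<in> insert x0 factors"
  shows "\<bar>rat_valuation p s\<bar> \<le> K"
proof -
  have "\<bar>rat_valuation p s\<bar> \<le> (\<Sum>s\<in>insert x0 factors. \<bar>rat_valuation p s\<bar>)"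
    using assms finite_factors by (intro member_le_sum) auto
  also have "\<dots> \<le> K"
    unfolding K_def using assms finite_relevant_primes
    by (intro member_le_sum) (auto intro: sum_nonneg)
  finally show ?thesis .
qed

lemma prime_if_relevant: "p \<in> relevant_primes \<Longrightarrow> prime p"
  by (simp add: relevant_primes_def)

lemma rat_valuation_irrelevant:
  "prime p \<Longrightarrow> p \<notin> relevant_primes \<Longrightarrow> s \<in> insert x0 factors \<Longrightarrow> rat_valuation p s = 0"
  unfolding relevant_primes_def by auto

lemma mult_eq_1_iff_windows:
  assumes windows: "x \<noteq> 0 \<Longrightarrow> \<forall>i<n. window_inv K (rat_valuation (ps ! i) x) (rs ! i) (cnt i)"
    and irrelevant: "x \<noteq> 0 \<Longrightarrow> \<forall>p. prime p \<and> p \<notin> relevant_primes \<longrightarrow> rat_valuation p x = 0"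
    and s: "s \<in> factors"
  shows "x * s = 1 \<longleftrightarrow>
           sgn x * sgn s = 1 \<and> (\<forall>i<n. cnt i = 0 \<and> rs ! i + rat_valuation (ps ! i) s = 0)"
proof (cases "x = 0 \<or> s = 0")
  case False
  hence "x \<noteq> 0" "s \<noteq> 0" by auto
  have "(\<forall>p. prime p \<longrightarrow> rat_valuation p (x * s) = 0) \<longleftrightarrow>
        (\<forall>p\<in>relevant_primes. rat_valuation p x + rat_valuation p s = 0)"
    using irrelevant[OF \<open>x \<noteq> 0\<close>] rat_valuation_irrelevant[of _ s] s
      rat_valuation_mult[OF _ \<open>x \<noteq> 0\<close> \<open>s \<noteq> 0\<close>] prime_if_relevant
    by (metis add.right_neutral insertI2)
  also have "\<dots> \<longleftrightarrow> (\<forall>i<n. rat_valuation (ps ! i) x + rat_valuation (ps ! i) s = 0)"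
    by (simp add: set_ps[symmetric] all_set_conv_all_nth n_def)
  also have "\<dots> \<longleftrightarrow> (\<forall>i<n. cnt i = 0 \<and> rs ! i + rat_valuation (ps ! i) s = 0)"
  proof -
    have "rat_valuation (ps ! i) x + rat_valuation (ps ! i) s = 0 \<longleftrightarrow>
          cnt i = 0 \<and> rs ! i + rat_valuation (ps ! i) s = 0" if "i < n" for i
      using windows[OF \<open>x \<noteq> 0\<close>] that s set_ps rat_valuation_le_K[of "ps ! i" s] nth_mem[of i ps]
      by (intro window_inv_add_eq_0_iff) (auto simp: n_def)
    thus ?thesis by auto
  qed
  finally show ?thesis
    using rat_eq_1_iff_valuations[of "x * s"] by (simp add: sgn_mult[symmetric] sgn_1_pos)
qed auto

lemma register_bounded:
  assumes "rs \<in> registers" "i < n"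
  shows "\<bar>rs ! i\<bar> \<le> K"
proof -
  have "rs ! i \<in> set rs" using assms by (simp add: registers_def)
  thus ?thesis using assms(1) by (auto simp: registers_def abs_le_iff)
qed

lemma map_window_step_registers:
  assumes "rs \<in> registers" "\<And>i. i < n \<Longrightarrow> \<bar>d i\<bar> \<le> K"
  shows "map (\<lambda>i. fst (window_step K (z i) (rs ! i) (d i))) [0..<n] \<in> registers"
proof -
  have "fst (window_step K (z i) (rs ! i) (d i)) \<in> {-K..K}" if "i < n" for i
    using window_step_bounded(1)[OF register_bounded[OF assms(1) that] assms(2)[OF that], of "z i"]
    by (auto simp: abs_le_iff)
  thus ?thesis by (auto simp: registers_def)
qed

lemma simulates_step:
  assumes sim: "simulates (code, cnt) (q, x)" and \<sigma>: "\<sigma> \<in> tape_syms \<Sigma>"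
  shows "simulates (ca_step (Suc n) counter_trans (code, cnt) \<sigma>) (dva1_step \<delta> (q, x) \<sigma>)"
proof -
  obtain rs where code: "code = to_nat (q, sgn x, rs, x = 1)" and "q \<in> Q" and "rs \<in> registers"
    and windows: "x \<noteq> 0 \<Longrightarrow> \<forall>i<n. window_inv K (rat_valuation (ps ! i) x) (rs ! i) (cnt i)"
    and irrelevant: "x \<noteq> 0 \<Longrightarrow> \<forall>p. prime p \<and> p \<notin> relevant_primes \<longrightarrow> rat_valuation p x = 0"
    using sim unfolding simulates_def by auto
  define s where "s = dva1_factor \<delta> q \<sigma> (x = 1)"
  define \<theta> where "\<theta> = map (\<lambda>i. cnt i = 0) [0..<Suc n]"
  define ws where "ws = map (\<lambda>i. window_step K (\<theta> ! i) (rs ! i) (rat_valuation (ps ! i) s)) [0..<n]"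
  have ws: "ws ! i = window_step K (cnt i = 0) (rs ! i) (rat_valuation (ps ! i) s)" if "i < n" for i
    using that by (simp add: ws_def \<theta>_def del: upt_Suc)
  have s: "s \<in> factors"
    unfolding s_def using \<open>q \<in> Q\<close> \<sigma> by (rule factor_in_factors)
  have bound: "\<bar>rat_valuation (ps ! i) s\<bar> \<le> K" if "i < n" for i
    using rat_valuation_le_K[OF nth_ps_relevant[OF that] insertI2[OF s]] .
  have ca: "ca_step (Suc n) counter_trans (code, cnt) \<sigma> =
     (to_nat (fst (\<delta> q \<sigma> (x = 1)), sgn (x * s), map fst ws, x * s = 1),
      \<lambda>i. if i < Suc n then cnt i + (if i < n then snd (ws ! i) else 0) else cnt i)"
    using mult_eq_1_iff_windows[OF windows irrelevant s]
    unfolding ca_step_def counter_trans_def code s_def ws_def \<theta>_def dva1_factor_def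
    by (simp add: sgn_mult Let_def del: upt_Suc)
  have "map fst ws \<in> registers"
    using map_window_step_registers[of rs "\<lambda>i. rat_valuation (ps ! i) s" "\<lambda>i. \<theta> ! i"]
      \<open>rs \<in> registers\<close> bound
    by (simp add: ws_def comp_def)
  moreover have "\<forall>i<n. window_inv K (rat_valuation (ps ! i) (x * s))
                                   (map fst ws ! i) (cnt i + snd (ws ! i))"
    if "x * s \<noteq> 0"
  proof (intro allI impI)
    fix i assume "i < n"
    have "prime (ps ! i)" using prime_if_relevant[OF nth_ps_relevant[OF \<open>i < n\<close>]] .
    moreover have "map fst ws ! i = fst (ws ! i)" using \<open>i < n\<close> by (simp add: ws_def)
    ultimately show "window_inv K (rat_valuation (ps ! i) (x * s))
                       (map fst ws ! i) (cnt i + snd (ws ! i))"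
      using window_inv_step[OF windows[rule_format, OF _ \<open>i < n\<close>] bound[OF \<open>i < n\<close>]] that
      by (simp add: rat_valuation_mult ws[OF \<open>i < n\<close>])
  qed
  moreover have "\<forall>p. prime p \<and> p \<notin> relevant_primes \<longrightarrow> rat_valuation p (x * s) = 0"
    if "x * s \<noteq> 0"
    using that irrelevant rat_valuation_irrelevant[of _ s] s by (simp add: rat_valuation_mult)
  moreover have "fst (\<delta> q \<sigma> (x = 1)) \<in> Q"
    using is_dva \<open>q \<in> Q\<close> \<sigma> by (simp add: is_rtDVA_def)
  ultimately show ?thesis
    unfolding ca simulates_def by (simp add: dva1_step_def s_def)
qed

lemma simulates_run:
  assumes "simulates c d" "set xs \<subseteq> tape_syms \<Sigma>"
  shows "simulates (foldl (ca_step (Suc n) counter_trans) c xs) (foldl (dva1_step \<delta>) d xs)"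
  using assms
proof (induction xs arbitrary: c d)
  case (Cons \<sigma> xs)
  have "simulates (ca_step (Suc n) counter_trans c \<sigma>) (dva1_step \<delta> d \<sigma>)"
    using simulates_step[of "fst c" "snd c" "fst d" "snd d" \<sigma>] Cons.prems by simp
  with Cons show ?case by simp
qed simp

lemma simulates_init: "simulates (counter_init, \<lambda>_. 0) (q0, x0)"
proof -
  have "rat_valuation p x0 \<in> {-K..K}" if "p \<in> relevant_primes" for p
    using rat_valuation_le_K[OF that insertI1] by (simp add: abs_le_iff)
  hence "map (\<lambda>p. rat_valuation p x0) ps \<in> registers"
    using set_ps by (auto simp: registers_def n_def)
  moreover have
    "\<forall>i<n. window_inv K (rat_valuation (ps ! i) x0) (map (\<lambda>p. rat_valuation p x0) ps ! i) 0"
    using rat_valuation_le_K nth_ps_relevant by (simp add: window_inv_def n_def)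
  ultimately show ?thesis
    using is_dva rat_valuation_irrelevant
    unfolding simulates_def counter_init_def is_rtDVA_def by auto
qed

lemma simulates_accepting:
  "simulates (code, cnt) (q, x) \<Longrightarrow> code \<in> counter_accepting \<longleftrightarrow> q \<in> Qa \<and> x = 1"
  unfolding simulates_def counter_accepting_def
  by (auto simp: inj_image_mem_iff[OF inj_to_nat] sgn_if)

lemma is_rtDCA_counter_trans:
  "is_rtDCA (Suc n) \<Sigma> counter_states counter_trans counter_init counter_accepting"
  unfolding is_rtDCA_def
proof (intro conjI ballI allI impI)
  show "finite counter_states"
    using is_dva finite_lists_length_eq[of "{-K..K}" n]
    unfolding counter_states_def registers_def is_rtDVA_def by (simp add: conj_commute)
  show "counter_init \<in> counter_states"
    using simulates_init unfolding simulates_def counter_states_def counter_init_def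
    by (auto simp: sgn_if)
  show "counter_accepting \<subseteq> counter_states"
    using is_dva unfolding counter_accepting_def counter_states_def is_rtDVA_def by auto
next
  fix code \<sigma> and \<theta> :: "bool list"
  assume "code \<in> counter_states" "\<sigma> \<in> tape_syms \<Sigma>"
  then obtain q z rs f where code: "code = to_nat (q, z :: rat, rs, f :: bool)"
    and "q \<in> Q" "z \<in> {-1, 0, 1}" "rs \<in> registers"
    unfolding counter_states_def by blast
  define s where "s = dva1_factor \<delta> q \<sigma> f"
  have bound: "\<bar>rat_valuation (ps ! i) s\<bar> \<le> K" if "i < n" for i
    unfolding s_def
    using rat_valuation_le_K[OF nth_ps_relevant[OF that] insertI2[OF factor_in_factors]]
      \<open>q \<in> Q\<close> \<open>\<sigma> \<in> tape_syms \<Sigma>\<close> .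
  have trans_eq: "counter_trans code \<sigma> \<theta> =
     (to_nat (fst (\<delta> q \<sigma> f), z * sgn s,
        map (\<lambda>i. fst (window_step K (\<theta> ! i) (rs ! i) (rat_valuation (ps ! i) s))) [0..<n],
        z * sgn s = 1 \<and> (\<forall>i<n. \<theta> ! i \<and> rs ! i + rat_valuation (ps ! i) s = 0)),
      \<lambda>i. if i < n then snd (window_step K (\<theta> ! i) (rs ! i) (rat_valuation (ps ! i) s)) else 0)"
    unfolding counter_trans_def code s_def by (simp add: Let_def fun_eq_iff)
  have "z * sgn s \<in> {-1, 0, 1}" using \<open>z \<in> {-1, 0, 1}\<close> by (auto simp: sgn_if)
  moreover have "fst (\<delta> q \<sigma> f) \<in> Q"
    using is_dva \<open>q \<in> Q\<close> \<open>\<sigma> \<in> tape_syms \<Sigma>\<close> by (simp add: is_rtDVA_def)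
  ultimately show "fst (counter_trans code \<sigma> \<theta>) \<in> counter_states"
    unfolding trans_eq counter_states_def
    using map_window_step_registers[OF \<open>rs \<in> registers\<close> bound] by auto
  fix i assume "i < Suc n"
  thus "snd (counter_trans code \<sigma> \<theta>) i \<in> {-1, 0, 1}"
    unfolding trans_eq
    using window_step_bounded(2)[OF register_bounded[OF \<open>rs \<in> registers\<close>] bound] by auto
qed

lemma ca_accepts_iff_dva_accepts:
  assumes "w \<in> lists \<Sigma>" "v 0 = x0"
  shows "ca_accepts (Suc n) counter_trans counter_init counter_accepting w \<longleftrightarrow>
           dva_accepts 1 \<delta> q0 Qa v w"
proof -
  have "simulates (foldl (ca_step (Suc n) counter_trans) (counter_init, \<lambda>_. 0) (tape w))
                  (foldl (dva1_step \<delta>) (q0, x0) (tape w))"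
    using simulates_run[OF simulates_init set_tape_subset[OF assms(1)]] .
  thus ?thesis
    unfolding ca_accepts_def dva_accepts_1_iff assms(2)
    by (metis prod.collapse simulates_accepting)
qed

end

definition witness_alphabet :: "nat set" where
  "witness_alphabet = {0, 1, 2}"

definition witness_language :: "nat list set" where
  "witness_language =
     {replicate n 0 @ replicate m 1 @ replicate k 2 | n m k. k = m \<or> k = m + n}"

lemma count_list_replicate: "count_list (replicate n x) y = (if x = y then n else 0)"
  by (induction n) auto

lemma blocks_in_witness_language:
  "replicate n 0 @ replicate m 1 @ replicate k 2 \<in> witness_language \<longleftrightarrow> k = m \<or> k = m + n"
proof
  assume "replicate n 0 @ replicate m 1 @ replicate k 2 \<in> witness_language"
  then obtain n' m' k' where eq: "replicate n 0 @ replicate m 1 @ replicate k (2::nat) =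
      replicate n' 0 @ replicate m' 1 @ replicate k' 2" and "k' = m' \<or> k' = m' + n'"
    unfolding witness_language_def by blast
  moreover have "n = n'" "m = m'" "k = k'"
    using arg_cong[OF eq, of "\<lambda>w. count_list w 0"] arg_cong[OF eq, of "\<lambda>w. count_list w 1"]
      arg_cong[OF eq, of "\<lambda>w. count_list w 2"]
    by (simp_all add: count_list_replicate)
  ultimately show "k = m \<or> k = m + n" by simp
qed (auto simp: witness_language_def)

definition counter_incr :: "nat \<Rightarrow> int \<Rightarrow> nat \<Rightarrow> int" where
  "counter_incr j a = (\<lambda>i. if i = j then a else 0)"

text \<open>Counter 0 stores the number of 0s and counter 1 the number of 1s. In state 2 the 2s are
  matched against counter 1; once it is exhausted, state 3 matches the remaining 2s against
  counter 0. State 4 is a rejecting sink and 5 the accepting state.\<close>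

definition witness_trans :: ca_trans where
  "witness_trans q \<sigma> \<theta> = (case \<sigma> of
     Cent \<Rightarrow> (if q = 0 then 0 else 4, \<lambda>_. 0)
   | Sym x \<Rightarrow>
       (if x = 0 then (if q = 0 then (0, counter_incr 0 1) else (4, \<lambda>_. 0))
        else if x = 1 then (if q \<le> 1 then (1, counter_incr 1 1) else (4, \<lambda>_. 0))
        else if x = 2 \<and> q \<le> 3 then
          (if q = 3 \<or> \<theta> ! 1 then (3, counter_incr 0 (-1)) else (2, counter_incr 1 (-1)))
        else (4, \<lambda>_. 0))
   | Dollar \<Rightarrow> (if (q \<le> 2 \<and> \<theta> ! 1) \<or> (q = 3 \<and> \<theta> ! 0) then 5 else 4, \<lambda>_. 0))"

definition counters2 :: "int \<Rightarrow> int \<Rightarrow> nat \<Rightarrow> int" where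
  "counters2 a b = (\<lambda>i. if i = 0 then a else if i = 1 then b else 0)"

lemma ca_step_counters2:
  "ca_step 2 \<delta> (q, counters2 a b) \<sigma> =
     (let (q', d) = \<delta> q \<sigma> [a = 0, b = 0] in (q', counters2 (a + d 0) (b + d 1)))"
  by (cases "\<delta> q \<sigma> [a = 0, b = 0]")
     (auto simp: ca_step_def counters2_def fun_eq_iff numeral_2_eq_2 upt_rec)

lemma witness_run_zeros:
  "foldl (ca_step 2 witness_trans) (0, counters2 a 0) (map Sym (replicate n 0)) =
     (0, counters2 (a + int n) 0)"
proof (induction n arbitrary: a)
  case (Suc n)
  have "ca_step 2 witness_trans (0, counters2 a 0) (Sym 0) = (0, counters2 (a + 1) 0)"
    by (simp add: ca_step_counters2 witness_trans_def counter_incr_def)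
  thus ?case using Suc[of "a + 1"] by (simp add: algebra_simps)
qed simp

lemma witness_run_ones:
  "q \<le> 1 \<Longrightarrow> foldl (ca_step 2 witness_trans) (q, counters2 a b) (map Sym (replicate m 1)) =
     (if m = 0 then q else 1, counters2 a (b + int m))"
proof (induction m arbitrary: q b)
  case (Suc m)
  have "ca_step 2 witness_trans (q, counters2 a b) (Sym 1) = (1, counters2 a (b + 1))"
    using Suc.prems by (simp add: ca_step_counters2 witness_trans_def counter_incr_def)
  thus ?case using Suc.IH[of 1 "b + 1"] by (simp add: algebra_simps)
qed simp

lemma witness_run_twos_against_ones:
  "q \<le> 2 \<Longrightarrow> int j \<le> b \<Longrightarrow>
     foldl (ca_step 2 witness_trans) (q, counters2 a b) (map Sym (replicate j 2)) =
     (if j = 0 then q else 2, counters2 a (b - int j))"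
proof (induction j arbitrary: q b)
  case (Suc j)
  have "ca_step 2 witness_trans (q, counters2 a b) (Sym 2) = (2, counters2 a (b - 1))"
    using Suc.prems by (simp add: ca_step_counters2 witness_trans_def counter_incr_def)
  thus ?case using Suc.IH[of 2 "b - 1"] Suc.prems by (simp add: algebra_simps)
qed simp

lemma witness_run_twos_against_zeros:
  "q \<le> 3 \<Longrightarrow> foldl (ca_step 2 witness_trans) (q, counters2 a 0) (map Sym (replicate j 2)) =
     (if j = 0 then q else 3, counters2 (a - int j) 0)"
proof (induction j arbitrary: q a)
  case (Suc j)
  have "ca_step 2 witness_trans (q, counters2 a 0) (Sym 2) = (3, counters2 (a - 1) 0)"
    using Suc.prems by (simp add: ca_step_counters2 witness_trans_def counter_incr_def)
  thus ?case using Suc.IH[of 3 "a - 1"] Suc.prems by (simp add: algebra_simps)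
qed simp

lemma witness_run_prefix:
  obtains q where "q \<le> 1"
    "foldl (ca_step 2 witness_trans) (0, \<lambda>_. 0) (Cent # map Sym (replicate n 0 @ replicate m 1)) =
       (q, counters2 (int n) (int m))"
proof -
  have "(\<lambda>_. 0) = counters2 0 0" by (auto simp: counters2_def)
  moreover have "ca_step 2 witness_trans (0, counters2 0 0) Cent = (0, counters2 0 0)"
    by (simp add: ca_step_counters2 witness_trans_def)
  ultimately show thesis
    using witness_run_zeros[of 0 n] witness_run_ones[of 0 "int n" 0 m]
    by (intro that[of "if m = 0 then 0 else 1"]) auto
qed

lemma witness_accepts_blocks:
  "ca_accepts 2 witness_trans 0 {5} (replicate n 0 @ replicate m 1 @ replicate k 2) \<longleftrightarrow>
     k = m \<or> k = m + n"
proof -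
  obtain q1 where q1: "q1 \<le> 1"
    "foldl (ca_step 2 witness_trans) (0, \<lambda>_. 0) (Cent # map Sym (replicate n 0 @ replicate m 1)) =
       (q1, counters2 (int n) (int m))"
    by (rule witness_run_prefix)
  show ?thesis
  proof (cases "k \<le> m")
    case True
    obtain q2 where q2: "q2 \<le> 2"
      "foldl (ca_step 2 witness_trans) (q1, counters2 (int n) (int m)) (map Sym (replicate k 2)) =
         (q2, counters2 (int n) (int m - int k))"
      using witness_run_twos_against_ones[of q1 k "int m" "int n"] q1(1) True
      by (intro that[of "if k = 0 then q1 else 2"]) auto
    have "fst (ca_step 2 witness_trans (q2, counters2 (int n) (int m - int k)) Dollar) =
          (if k = m then 5 else 4)"
      using q2(1) True by (auto simp: ca_step_counters2 witness_trans_def)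
    thus ?thesis
      unfolding ca_accepts_def tape_def using q1 q2 True by (auto simp: foldl_append)
  next
    case False
    obtain q2 where q2: "q2 \<le> 2"
      "foldl (ca_step 2 witness_trans) (q1, counters2 (int n) (int m)) (map Sym (replicate m 2)) =
         (q2, counters2 (int n) 0)"
      using witness_run_twos_against_ones[of q1 m "int m" "int n"] q1(1)
      by (intro that[of "if m = 0 then q1 else 2"]) auto
    have q3: "foldl (ca_step 2 witness_trans) (q2, counters2 (int n) 0)
                (map Sym (replicate (k - m) 2)) =
        (3, counters2 (int n - int (k - m)) 0)"
      using witness_run_twos_against_zeros[of q2 "int n" "k - m"] q2(1) False by auto
    have "replicate k (2::nat) = replicate m 2 @ replicate (k - m) 2"
      using False by (simp flip: replicate_add)
    moreover have "fst (ca_step 2 witness_trans (3, counters2 (int n - int (k - m)) 0) Dollar) =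
        (if k = m + n then 5 else 4)"
      using False by (auto simp: ca_step_counters2 witness_trans_def)
    ultimately show ?thesis
      unfolding ca_accepts_def tape_def using q1 q2 q3 False by (auto simp: foldl_append)
  qed
qed

definition witness_phase :: "nat \<Rightarrow> nat set" where
  "witness_phase x = (if x = 0 then {0, 4} else if x = 1 then {1, 4} else {2, 3, 4})"

lemma witness_trans_phase:
  "x \<in> witness_alphabet \<Longrightarrow> fst (witness_trans q (Sym x) \<theta>) \<in> witness_phase x"
  by (auto simp: witness_trans_def witness_phase_def witness_alphabet_def)

lemma witness_trans_descent:
  "q \<in> witness_phase x \<Longrightarrow> y < x \<Longrightarrow> x \<in> witness_alphabet \<Longrightarrow>
     fst (witness_trans q (Sym y) \<theta>) = 4"
  by (auto simp: witness_trans_def witness_phase_def witness_alphabet_def)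

lemma fst_ca_step: "fst (ca_step k \<delta> c \<sigma>) = fst (\<delta> (fst c) \<sigma> (map (\<lambda>i. snd c i = 0) [0..<k]))"
  by (cases c; cases "\<delta> (fst c) \<sigma> (map (\<lambda>i. snd c i = 0) [0..<k])") (simp add: ca_step_def)

lemma witness_run_sink: "fst c = 4 \<Longrightarrow> fst (foldl (ca_step 2 witness_trans) c xs) = 4"
proof (induction xs arbitrary: c)
  case (Cons \<sigma> xs)
  have "fst (witness_trans 4 \<sigma> \<theta>) = 4" for \<theta>
    by (cases \<sigma>) (auto simp: witness_trans_def)
  with Cons show ?case by (simp add: fst_ca_step)
qed simp

lemma witness_rejects_descent:
  assumes "y < x" "x \<in> witness_alphabet"
  shows "\<not> ca_accepts 2 witness_trans 0 {5} (u @ x # y # v)"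
proof -
  define c where "c = foldl (ca_step 2 witness_trans) (0, \<lambda>_. 0) (Cent # map Sym u)"
  have "fst (ca_step 2 witness_trans c (Sym x)) \<in> witness_phase x"
    unfolding fst_ca_step using witness_trans_phase[OF assms(2)] .
  hence "fst (ca_step 2 witness_trans (ca_step 2 witness_trans c (Sym x)) (Sym y)) = 4"
    unfolding fst_ca_step[of 2 _ "ca_step 2 witness_trans c (Sym x)"]
    using witness_trans_descent assms by (simp add: fst_ca_step)
  hence "fst (foldl (ca_step 2 witness_trans)
               (ca_step 2 witness_trans (ca_step 2 witness_trans c (Sym x)) (Sym y))
               (map Sym v @ [Dollar])) = 4"
    by (rule witness_run_sink)
  thus ?thesis unfolding ca_accepts_def tape_def c_def by simp
qed

lemma sorted_witness_word:
  "sorted w \<Longrightarrow> set w \<subseteq> witness_alphabet \<Longrightarrow>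
     \<exists>n m k. w = replicate n 0 @ replicate m 1 @ replicate k 2"
proof (induction w)
  case Nil thus ?case by (intro exI[of _ 0]) simp
next
  case (Cons a w)
  then obtain n m k where w: "w = replicate n 0 @ replicate m 1 @ replicate k 2" by auto
  have "\<forall>b\<in>set w. a \<le> b" "a \<in> witness_alphabet" using Cons.prems by auto
  then consider "a = 0" | "a = 1" "n = 0" | "a = 2" "n = 0" "m = 0"
    unfolding w witness_alphabet_def by (cases n; cases m) auto
  thus ?case
  proof cases
    case 1 thus ?thesis using w by (intro exI[of _ "Suc n"] exI[of _ m] exI[of _ k]) simp
  next
    case 2 thus ?thesis using w by (intro exI[of _ 0] exI[of _ "Suc m"] exI[of _ k]) simp
  next
    case 3 thus ?thesis using w by (intro exI[of _ 0] exI[of _ 0] exI[of _ "Suc k"]) simp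
  qed
qed

lemma unsorted_descent:
  assumes "\<not> sorted (w :: nat list)"
  obtains u x y v where "w = u @ x # y # v" "y < x"
proof -
  obtain i where i: "Suc i < length w" "w ! Suc i < w ! i"
    using assms unfolding sorted_iff_nth_Suc by (auto simp: not_le)
  have "w = take i w @ w ! i # w ! Suc i # drop (Suc (Suc i)) w"
    using i by (simp add: Cons_nth_drop_Suc)
  thus thesis using i(2) by (rule that)
qed

lemma witness_language_accepted:
  "{w \<in> lists witness_alphabet. ca_accepts 2 witness_trans 0 {5} w} = witness_language"
proof (intro set_eqI iffI)
  fix w assume "w \<in> {w \<in> lists witness_alphabet. ca_accepts 2 witness_trans 0 {5} w}"
  hence w: "w \<in> lists witness_alphabet" "ca_accepts 2 witness_trans 0 {5} w" by auto
  have "sorted w"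
  proof (rule ccontr)
    assume "\<not> sorted w"
    then obtain u x y v where "w = u @ x # y # v" "y < x" by (rule unsorted_descent)
    thus False using witness_rejects_descent w by auto
  qed
  then obtain n m k where "w = replicate n 0 @ replicate m 1 @ replicate k 2"
    using sorted_witness_word w(1) by blast
  thus "w \<in> witness_language"
    using w(2) witness_accepts_blocks unfolding witness_language_def by blast
next
  fix w assume "w \<in> witness_language"
  thus "w \<in> {w \<in> lists witness_alphabet. ca_accepts 2 witness_trans 0 {5} w}"
    using witness_accepts_blocks unfolding witness_language_def witness_alphabet_def by auto
qed

lemma witness_language_rtDCA: "(witness_alphabet, witness_language) \<in> L_rtDCA 2"
proof -
  have "is_rtDCA 2 witness_alphabet {0..5} witness_trans 0 {5}"
    unfolding is_rtDCA_def
  proof (intro conjI ballI allI impI)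
    fix q \<sigma> \<theta> and i :: nat
    show "fst (witness_trans q \<sigma> \<theta>) \<in> {0..5}"
      by (cases \<sigma>) (auto simp: witness_trans_def)
    show "i < 2 \<Longrightarrow> snd (witness_trans q \<sigma> \<theta>) i \<in> {-1, 0, 1}"
      by (cases \<sigma>) (auto simp: witness_trans_def counter_incr_def)
  qed auto
  thus ?thesis
    unfolding L_rtDCA_def using witness_language_accepted[symmetric]
    by (auto simp: witness_alphabet_def)
qed

definition twos_run :: "dva_trans \<Rightarrow> nat \<times> rat \<Rightarrow> nat \<Rightarrow> nat \<times> rat" where
  "twos_run \<delta> c j = foldl (dva1_step \<delta>) c (replicate j (Sym 2))"

text \<open>The run on 2s of a vector automaton whose value is never 1.\<close>

fun blind_state :: "dva_trans \<Rightarrow> nat \<Rightarrow> nat \<Rightarrow> nat" where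
  "blind_state \<delta> q 0 = q"
| "blind_state \<delta> q (Suc j) = fst (\<delta> (blind_state \<delta> q j) (Sym 2) False)"

definition blind_factor :: "dva_trans \<Rightarrow> nat \<Rightarrow> nat \<Rightarrow> rat" where
  "blind_factor \<delta> q j = (\<Prod>i<j. dva1_factor \<delta> (blind_state \<delta> q i) (Sym 2) False)"

definition accepts_at_end :: "dva_trans \<Rightarrow> nat set \<Rightarrow> nat \<times> rat \<Rightarrow> bool" where
  "accepts_at_end \<delta> Qa c \<longleftrightarrow> fst (dva1_step \<delta> c Dollar) \<in> Qa \<and> snd (dva1_step \<delta> c Dollar) = 1"

definition hits :: "dva_trans \<Rightarrow> nat set \<Rightarrow> nat \<times> rat \<Rightarrow> nat \<Rightarrow> bool" where
  "hits \<delta> Qa c j \<longleftrightarrow> snd (twos_run \<delta> c j) = 1 \<or> accepts_at_end \<delta> Qa (twos_run \<delta> c j)"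

definition first_hit :: "dva_trans \<Rightarrow> nat set \<Rightarrow> nat \<times> rat \<Rightarrow> nat" where
  "first_hit \<delta> Qa c = (LEAST j. hits \<delta> Qa c j)"

definition hit_signature :: "dva_trans \<Rightarrow> nat set \<Rightarrow> nat \<times> rat \<Rightarrow> nat \<times> nat \<times> bool" where
  "hit_signature \<delta> Qa c =
     (fst c, first_hit \<delta> Qa c, snd (twos_run \<delta> c (first_hit \<delta> Qa c)) = 1)"

definition hit_factor :: "dva_trans \<Rightarrow> nat \<Rightarrow> nat \<Rightarrow> bool \<Rightarrow> rat" where
  "hit_factor \<delta> q t b =
     blind_factor \<delta> q t * (if b then 1 else dva1_factor \<delta> (blind_state \<delta> q t) Dollar False)"

lemma twos_run_blind:
  "(\<forall>i<j. snd (twos_run \<delta> c i) \<noteq> 1) \<Longrightarrow>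
     twos_run \<delta> c j = (blind_state \<delta> (fst c) j, snd c * blind_factor \<delta> (fst c) j)"
proof (induction j)
  case (Suc j)
  hence run: "twos_run \<delta> c j = (blind_state \<delta> (fst c) j, snd c * blind_factor \<delta> (fst c) j)"
    and "snd (twos_run \<delta> c j) \<noteq> 1"
    by auto
  have "twos_run \<delta> c (Suc j) = dva1_step \<delta> (twos_run \<delta> c j) (Sym 2)"
    by (simp add: twos_run_def flip: replicate_append_same)
  with run \<open>snd (twos_run \<delta> c j) \<noteq> 1\<close> show ?case
    by (simp add: dva1_step_def blind_factor_def mult.assoc)
qed (simp add: twos_run_def blind_factor_def)

lemma first_hit_value:
  assumes "hits \<delta> Qa c j" "hit_signature \<delta> Qa c = (q, t, b)"
  shows "snd c * hit_factor \<delta> q t b = 1"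
proof -
  have q: "q = fst c" and t: "t = first_hit \<delta> Qa c" and b: "b = (snd (twos_run \<delta> c t) = 1)"
    using assms(2) by (auto simp: hit_signature_def)
  have "hits \<delta> Qa c t"
    unfolding t first_hit_def using assms(1) by (rule LeastI)
  have "\<not> hits \<delta> Qa c i" if "i < t" for i
    using not_less_Least[OF that[unfolded t first_hit_def]] by (simp add: first_hit_def)
  hence run: "twos_run \<delta> c t = (blind_state \<delta> q t, snd c * blind_factor \<delta> q t)"
    unfolding q by (intro twos_run_blind) (auto simp: hits_def)
  show ?thesis
    using \<open>hits \<delta> Qa c t\<close> unfolding b hits_def accepts_at_end_def run
    by (auto simp: hit_factor_def dva1_step_def mult.assoc)
qed

lemma hit_signature_inj:
  assumes "hits \<delta> Qa c j" "hits \<delta> Qa c' j'" "hit_signature \<delta> Qa c = hit_signature \<delta> Qa c'"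
  shows "c = c'"
proof -
  obtain q t b where sig: "hit_signature \<delta> Qa c = (q, t, b)" by (metis prod.collapse)
  have "snd c * hit_factor \<delta> q t b = 1" "snd c' * hit_factor \<delta> q t b = 1"
    using first_hit_value[OF assms(1) sig] first_hit_value[OF assms(2)] sig assms(3) by simp_all
  hence "snd c = snd c'" by (metis mult_cancel_right mult_eq_0_iff zero_neq_one)
  moreover have "fst c = fst c'" using assms(3) by (simp add: hit_signature_def)
  ultimately show ?thesis by (simp add: prod_eq_iff)
qed

lemma doubleton_shift_eq:
  fixes m n m' n' :: nat
  assumes "{m, m + n} = {m', m' + n'}"
  shows "m = m' \<and> n = n'"
  using assms by (auto simp: doubleton_eq_iff)

lemma grid_not_inj_on:
  assumes "finite A" "2 * card A \<le> N"
    and "f ` ({0..N} \<times> {0..N}) \<subseteq> A \<times> {0..N} \<times> (UNIV :: bool set)"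
  shows "\<not> inj_on f ({0..N} \<times> {0..N})"
proof
  assume "inj_on f ({0..N} \<times> {0..N})"
  hence "card ({0..N} \<times> {0..N}) \<le> card (A \<times> {0..N} \<times> (UNIV :: bool set))"
    using assms(1,3) by (intro card_inj_on_le) auto
  hence "(N + 1) * (N + 1) \<le> (2 * card A) * (N + 1)"
    by (simp add: card_cartesian_product algebra_simps)
  also have "\<dots> \<le> N * (N + 1)"
    using assms(2) by (rule mult_right_mono) simp
  finally show False by simp
qed

lemma witness_language_not_rtDVA1: "(witness_alphabet, witness_language) \<notin> L_rtDVA 1"
proof
  assume "(witness_alphabet, witness_language) \<in> L_rtDVA 1"
  then obtain Q \<delta> q0 Qa v where dva: "is_rtDVA 1 witness_alphabet Q \<delta> q0 Qa"
    and L: "witness_language = {w \<in> lists witness_alphabet. dva_accepts 1 \<delta> q0 Qa v w}"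
    unfolding L_rtDVA_def by blast
  define conf where
    "conf n m =
       foldl (dva1_step \<delta>) (q0, v 0) (Cent # map Sym (replicate n (0::nat) @ replicate m 1))"
    for n m
  have accepts: "accepts_at_end \<delta> Qa (twos_run \<delta> (conf n m) k) \<longleftrightarrow> k \<in> {m, m + n}" for n m k
  proof -
    let ?w = "replicate n 0 @ replicate m 1 @ replicate k (2::nat)"
    have "tape ?w =
          (Cent # map Sym (replicate n 0 @ replicate m 1)) @ replicate k (Sym 2) @ [Dollar]"
      by (simp add: tape_def)
    hence "accepts_at_end \<delta> Qa (twos_run \<delta> (conf n m) k) \<longleftrightarrow> dva_accepts 1 \<delta> q0 Qa v ?w"
      unfolding dva_accepts_1_iff by (simp add: accepts_at_end_def twos_run_def conf_def)
    also have "\<dots> \<longleftrightarrow> ?w \<in> witness_language"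
      using L by (auto simp: witness_alphabet_def)
    finally show ?thesis using blocks_in_witness_language[of n m k] by auto
  qed
  hence hits: "hits \<delta> Qa (conf n m) m" for n m by (simp add: hits_def)
  define N where "N = 2 * card Q"
  have "inj_on (\<lambda>(n, m). hit_signature \<delta> Qa (conf n m)) ({0..N} \<times> {0..N})"
  proof (rule inj_onI, clarify)
    fix n m n' m'
    assume "hit_signature \<delta> Qa (conf n m) = hit_signature \<delta> Qa (conf n' m')"
    with hits hits have "conf n m = conf n' m'" by (rule hit_signature_inj)
    hence "{m, m + n} = {m', m' + n'}"
      using accepts[of n m] accepts[of n' m'] by (simp add: set_eq_iff)
    thus "n = n' \<and> m = m'" by (simp add: doubleton_shift_eq)
  qed
  moreover have "hit_signature \<delta> Qa (conf n m) \<in> Q \<times> {0..N} \<times> (UNIV :: bool set)"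
    if "m \<le> N" for n m
  proof -
    have "set (Cent # map Sym (replicate n 0 @ replicate m 1)) \<subseteq> tape_syms witness_alphabet"
      by (auto simp: tape_syms_def witness_alphabet_def)
    hence "fst (conf n m) \<in> Q"
      unfolding conf_def using dva
      by (intro dva1_run_state_closed[OF dva]) (auto simp: is_rtDVA_def)
    moreover have "first_hit \<delta> Qa (conf n m) \<le> m"
      unfolding first_hit_def using hits by (rule Least_le)
    ultimately show ?thesis
      using that by (simp add: hit_signature_def)
  qed
  hence "(\<lambda>(n, m). hit_signature \<delta> Qa (conf n m)) ` ({0..N} \<times> {0..N}) \<subseteq>
           Q \<times> {0..N} \<times> (UNIV :: bool set)"
    by (intro image_subsetI) (auto simp del: mem_Times_iff)
  ultimately show False
    using grid_not_inj_on[of Q N] dva by (simp add: is_rtDVA_def N_def)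
qed

lemma L_rtDVA_1_subset_L_rtDCA: "L_rtDVA 1 \<subseteq> (\<Union>k\<in>{1..}. L_rtDCA k)"
proof clarify
  fix \<Sigma> L assume "(\<Sigma>, L) \<in> L_rtDVA 1"
  then obtain Q \<delta> q0 Qa v where "finite \<Sigma>" "\<Sigma> \<noteq> {}" "is_rtDVA 1 \<Sigma> Q \<delta> q0 Qa"
    and L: "L = {w \<in> lists \<Sigma>. dva_accepts 1 \<delta> q0 Qa v w}"
    unfolding L_rtDVA_def by blast
  then interpret dva1_simulation \<Sigma> Q \<delta> q0 Qa "v 0" by unfold_locales
  have "L = {w \<in> lists \<Sigma>. ca_accepts (Suc n) counter_trans counter_init counter_accepting w}"
    unfolding L using ca_accepts_iff_dva_accepts by auto
  hence "(\<Sigma>, L) \<in> L_rtDCA (Suc n)"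
    unfolding L_rtDCA_def using \<open>finite \<Sigma>\<close> \<open>\<Sigma> \<noteq> {}\<close> is_rtDCA_counter_trans by blast
  thus "(\<Sigma>, L) \<in> (\<Union>k\<in>{1..}. L_rtDCA k)" by auto
qed

theorem theorem5:
  shows "L_rtDVA 1 \<subset> (\<Union>k\<in>{1..}. L_rtDCA k)"
proof
  show "L_rtDVA 1 \<subseteq> (\<Union>k\<in>{1..}. L_rtDCA k)"
    by (rule L_rtDVA_1_subset_L_rtDCA)
  show "L_rtDVA 1 \<noteq> (\<Union>k\<in>{1..}. L_rtDCA k)"
    using witness_language_rtDCA witness_language_not_rtDVA1 by fastforce
qed

end
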